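(* Let $n\ge 2$. <ol> <li>For every $n\ge2$, $\mathrm{A}'\cap\mathrm{B}'=\mathrm{Q}'$. If $n\equiv 1,2,3\pmod 4$, then $\mathrm{Q}'=\mathrm{Q}$.</li> <li>If $n\equiv 0\pmod 4$, then $\mathrm{Q}\subseteq\mathrm{Q}'\subseteq\mathrm{P}$ and $\mathrm{Q}\neq\mathrm{Q}'$.</li> <li>If $n=4$, then $\mathrm{Q}'=\mathrm{P}$.</li> <li>If $n\equiv0\pmod 4$ and $n\ge 8$, then $\mathrm{Q}'\ne\mathrm{P}$.</li> </ol>
   Context: Let $\mathrm{C}$ be either the real Clifford algebra $C\ell_{p,q}$ with $p+q=n$, or the complex Clifford algebra $C\ell(\mathbb{C}^n)$. It has identity $e$ and generators $e_1,\dots,e_n$ satisfying $e_ae_b+e_be_a=2\eta_{ab}e$. In the real case $\eta=\mathrm{diag}(1,\dots,1,-1,\dots,-1)$ with $p$ entries $+1$ and $q$ entries $-1$. In the complex case $\eta=I_n$. $\mathrm{C}^k$ is the grade-$k$ subspace, spanned by the products $e_{a_1}\cdots e_{a_k}$ with $a_1<\dots<a_k$. The even subspace is $\mathrm{C}^{(0)}=\bigoplus_{k\text{ even}}\mathrm{C}^k$ and the odd subspace is $\mathrm{C}^{(1)}=\bigoplus_{k\text{ odd}}\mathrm{C}^k$. The grade involution $U\mapsto\hat U$ is the linear automorphism acting on $\mathrm{C}^k$ as $(-1)^k$. The reversion $U\mapsto\tilde U$ is the linear anti-automorphism acting on $\mathrm{C}^k$ as $(-1)^{k(k-1)/2}$.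 For $S\subseteq\mathrm{C}$, $S^\times$ is the set of elements of $S$ invertible in $\mathrm{C}$, and $\mathrm{C}^{\times(j)}:=(\mathrm{C}^{(j)})^\times$. $\mathrm{Z}$ is the center: $\mathrm{Z}=\mathrm{C}^0$ for $n$ even and $\mathrm{Z}=\mathrm{C}^0\oplus\mathrm{C}^n$ for $n$ odd. Define: <ul> <li>$\mathrm{P}:=\mathrm{Z}^\times(\mathrm{C}^{\times(0)}\cup\mathrm{C}^{\times(1)})=\{WT: W\in\mathrm{Z}^\times, T\in\mathrm{C}^{\times(0)}\cup\mathrm{C}^{\times(1)}\}$;</li> <li>$\mathrm{Q}:=\{T\in\mathrm{P}:\tilde TT\in\mathrm{Z}^\times\}$;</li> <li>$\mathrm{Q}':=\{T\in\mathrm{P}:\tilde TT\in(\mathrm{C}^0\oplus\mathrm{C}^n)^\times\}$;</li> <li>$\mathrm{A}':=\{T\in\mathrm{C}^\times:\tilde TT\in(\mathrm{C}^0\oplus\mathrm{C}^n)^\times\}$;</li> <li>$\mathrm{B}':=\{T\in\mathrm{C}^\times:\hat{\tilde T}T\in(\mathrm{C}^0\oplus\mathrm{C}^n)^\times\}$.</li> </ul> *)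

theory Defs
  imports Complex_Main
begin

text \<open>Clifford algebra on generators e_0,...,e_{n-1} (0-indexed) with diagonal
metric given by sg :: nat => 'a (sg a = eta_aa).  An element is a coefficient
function on finite sets of generator indices (basis blades e_A, A subset of {..<n}),
vanishing outside subsets of {..<n}.\<close>

definition clif :: "nat \<Rightarrow> (nat set \<Rightarrow> 'a::field) set" where
  "clif n = {x. \<forall>A. \<not> A \<subseteq> {..<n} \<longrightarrow> x A = 0}"

text \<open>e_A e_B = (-1)^{#{(a,b) in A x B. b < a}} (prod_{a in A cap B} eta_aa) e_{A sym-diff B}\<close>
definition blade_sign :: "(nat \<Rightarrow> 'a::field) \<Rightarrow> nat set \<Rightarrow> nat set \<Rightarrow> 'a" where
  "blade_sign sg A B = (-1) ^ card {(a,b). a \<in> A \<and> b \<in> B \<and> b < a} * (\<Prod>a\<in>A \<inter> B. sg a)"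

definition cl_mult :: "(nat \<Rightarrow> 'a::field) \<Rightarrow> nat \<Rightarrow> (nat set \<Rightarrow> 'a) \<Rightarrow> (nat set \<Rightarrow> 'a) \<Rightarrow> (nat set \<Rightarrow> 'a)" where
  "cl_mult sg n x y = (\<lambda>C. \<Sum>A\<in>Pow {..<n}. \<Sum>B\<in>Pow {..<n}.
      if (A - B) \<union> (B - A) = C then blade_sign sg A B * x A * y B else 0)"

definition cl_one :: "nat set \<Rightarrow> 'a::field" where
  "cl_one = (\<lambda>A. if A = {} then 1 else 0)"

definition cl_invertible :: "(nat \<Rightarrow> 'a::field) \<Rightarrow> nat \<Rightarrow> (nat set \<Rightarrow> 'a) \<Rightarrow> bool" where
  "cl_invertible sg n x \<longleftrightarrow> x \<in> clif n \<and>
     (\<exists>y\<in>clif n. cl_mult sg n x y = cl_one \<and> cl_mult sg n y x = cl_one)"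

definition cl_units :: "(nat \<Rightarrow> 'a::field) \<Rightarrow> nat \<Rightarrow> (nat set \<Rightarrow> 'a) set \<Rightarrow> (nat set \<Rightarrow> 'a) set" where
  "cl_units sg n S = {x \<in> S. cl_invertible sg n x}"

definition cl_hat :: "(nat set \<Rightarrow> 'a::field) \<Rightarrow> (nat set \<Rightarrow> 'a)" where
  "cl_hat x = (\<lambda>A. (-1) ^ card A * x A)"

definition cl_rev :: "(nat set \<Rightarrow> 'a::field) \<Rightarrow> (nat set \<Rightarrow> 'a)" where
  "cl_rev x = (\<lambda>A. (-1) ^ (card A * (card A - 1) div 2) * x A)"

definition cl_even :: "nat \<Rightarrow> (nat set \<Rightarrow> 'a::field) set" where
  "cl_even n = {x \<in> clif n. \<forall>A. odd (card A) \<longrightarrow> x A = 0}"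

definition cl_odd :: "nat \<Rightarrow> (nat set \<Rightarrow> 'a::field) set" where
  "cl_odd n = {x \<in> clif n. \<forall>A. even (card A) \<longrightarrow> x A = 0}"

definition cl_scal_pseudo :: "nat \<Rightarrow> (nat set \<Rightarrow> 'a::field) set" where
  "cl_scal_pseudo n = {x \<in> clif n. \<forall>A. A \<noteq> {} \<and> A \<noteq> {..<n} \<longrightarrow> x A = 0}"

definition cl_center :: "nat \<Rightarrow> (nat set \<Rightarrow> 'a::field) set" where
  "cl_center n = (if even n then {x \<in> clif n. \<forall>A. A \<noteq> {} \<longrightarrow> x A = 0}
                  else cl_scal_pseudo n)"

definition cl_P :: "(nat \<Rightarrow> 'a::field) \<Rightarrow> nat \<Rightarrow> (nat set \<Rightarrow> 'a) set" where
  "cl_P sg n = {cl_mult sg n W T | W T. W \<in> cl_units sg n (cl_center n) \<and>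
                  T \<in> cl_units sg n (cl_even n) \<union> cl_units sg n (cl_odd n)}"

definition cl_Q :: "(nat \<Rightarrow> 'a::field) \<Rightarrow> nat \<Rightarrow> (nat set \<Rightarrow> 'a) set" where
  "cl_Q sg n = {T \<in> cl_P sg n. cl_mult sg n (cl_rev T) T \<in> cl_units sg n (cl_center n)}"

definition cl_Q' :: "(nat \<Rightarrow> 'a::field) \<Rightarrow> nat \<Rightarrow> (nat set \<Rightarrow> 'a) set" where
  "cl_Q' sg n = {T \<in> cl_P sg n. cl_mult sg n (cl_rev T) T \<in> cl_units sg n (cl_scal_pseudo n)}"

definition cl_A' :: "(nat \<Rightarrow> 'a::field) \<Rightarrow> nat \<Rightarrow> (nat set \<Rightarrow> 'a) set" where
  "cl_A' sg n = {T \<in> cl_units sg n (clif n).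
                   cl_mult sg n (cl_rev T) T \<in> cl_units sg n (cl_scal_pseudo n)}"

definition cl_B' :: "(nat \<Rightarrow> 'a::field) \<Rightarrow> nat \<Rightarrow> (nat set \<Rightarrow> 'a) set" where
  "cl_B' sg n = {T \<in> cl_units sg n (clif n).
                   cl_mult sg n (cl_hat (cl_rev T)) T \<in> cl_units sg n (cl_scal_pseudo n)}"

definition real_sig :: "nat \<Rightarrow> nat \<Rightarrow> real" where
  "real_sig p = (\<lambda>a. if a < p then 1 else -1)"

definition complex_sig :: "nat \<Rightarrow> complex" where
  "complex_sig = (\<lambda>a. 1)"

end

theory Submission
  imports Defs
begin

(* Everything reduces to C^0 + C^n, whose elements a + b e_N multiply like a two-dimensional
   algebra with e_N e_N = +-1; e_N is central for n odd and anticommutes with odd elements for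
   n even.  If T lies in A' and B', then M = T^-1 hat(T) is an element of C^0 + C^n with
   hat(T) = T M.  For n even M M = 1: M = +-1 makes T even or odd, while M = +-e_N is impossible,
   since e_N T = hat(T) e_N = T would force e_N = 1.  For n odd M is central with M hat(M) = 1, and a
   central unit W with hat(W) = M W makes W^-1 T even.  Conversely, for T = W T' in Q' the element
   hat(rev T) T is +-(rev T) T times a central unit.  Reversion multiplies e_N by
   (-1)^(n(n-1)/2): for n = 2 mod 4 this forces (rev T) T to be scalar, for n = 0 mod 4 the even
   unit 2 + e_N lies in Q' but not in Q.  For n = 4 every grade strictly between 0 and 4 is killed
   by the grade involution or by reversion, whereas for n >= 8 the element T = 2 + e_0123 of P has
   (rev T) T = 4 +- 1 + 4 e_0123 outside C^0 + C^n. *)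

section \<open>Signs of products of basis blades\<close>

text \<open>Product form of the sign (-1)^(number of inversions) in blade_sign: unlike the
  cardinality, it is multiplicative in each argument under symmetric difference.\<close>

definition order_sign :: "nat set \<Rightarrow> nat set \<Rightarrow> 'a::field" where
  "order_sign A B = (\<Prod>a\<in>A. \<Prod>b\<in>B. if b < a then -1 else 1)"

lemma power_card_inversions:
  assumes "finite A" "finite B"
  shows "(-1::'a::field) ^ card {(a,b). a \<in> A \<and> b \<in> B \<and> b < a} = order_sign A B"
proof -
  let ?S = "{(a,b). a \<in> A \<and> b \<in> B \<and> b < a}"
  have S: "?S = {x \<in> A \<times> B. case x of (a,b) \<Rightarrow> b < a}" by auto
  have "(-1::'a) ^ card ?S = (\<Prod>x\<in>?S. -1)" by simp
  also have "\<dots> = (\<Prod>x\<in>A \<times> B. case x of (a,b) \<Rightarrow> if b < a then -1 else 1)"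
    unfolding S using assms by (subst prod.inter_filter) (auto intro!: prod.cong)
  also have "\<dots> = order_sign A B" unfolding order_sign_def prod.cartesian_product by simp
  finally show ?thesis .
qed

lemma blade_sign_eq:
  "finite A \<Longrightarrow> finite B \<Longrightarrow> blade_sign sg A B = order_sign A B * (\<Prod>a\<in>A \<inter> B. sg a)"
  unfolding blade_sign_def by (simp add: power_card_inversions)

lemma prod_square_eq_one:
  "(\<And>x. x \<in> A \<Longrightarrow> f x * f x = (1::'a::field)) \<Longrightarrow> prod f A * prod f A = 1"
  by (simp add: prod.distrib[symmetric] del: prod.distrib)

lemma prod_sym_diff:
  fixes f :: "nat \<Rightarrow> 'a::field"
  assumes "finite A" "finite B" "\<And>x. f x * f x = 1"
  shows "prod f (sym_diff A B) = prod f A * prod f B"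
proof -
  have A: "prod f A = prod f (A - B) * prod f (A \<inter> B)"
    using prod.Int_Diff[OF assms(1), of f B] by (simp add: mult.commute)
  have B: "prod f B = prod f (B - A) * prod f (A \<inter> B)"
    using prod.Int_Diff[OF assms(2), of f A] by (simp add: mult.commute Int_commute)
  have "prod f (sym_diff A B) = prod f (A - B) * prod f (B - A)"
    using assms by (intro prod.union_disjoint) auto
  also have "\<dots> = prod f (A - B) * prod f (B - A) * (prod f (A \<inter> B) * prod f (A \<inter> B))"
    using prod_square_eq_one[of "A \<inter> B" f] assms(3) by simp
  finally show ?thesis unfolding A B by (simp add: mult_ac)
qed

lemma order_sign_square: "order_sign A B * order_sign A B = (1::'a::field)"
  unfolding order_sign_def by (intro prod_square_eq_one) auto

lemma order_sign_sym_diff_left: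
  "finite A \<Longrightarrow> finite B \<Longrightarrow> order_sign (sym_diff A B) C = (order_sign A C * order_sign B C :: 'a::field)"
  unfolding order_sign_def by (rule prod_sym_diff) (auto intro: prod_square_eq_one)

lemma order_sign_sym_diff_right:
  "finite B \<Longrightarrow> finite C \<Longrightarrow> order_sign A (sym_diff B C) = (order_sign A B * order_sign A C :: 'a::field)"
  unfolding order_sign_def prod.distrib[symmetric]
  by (rule prod.cong[OF refl], rule prod_sym_diff) auto

lemma blade_sign_cocycle:
  assumes "finite A" "finite B" "finite C"
  shows "blade_sign sg A B * blade_sign sg (sym_diff A B) C
       = blade_sign sg A (sym_diff B C) * (blade_sign sg B C :: 'a::field)"
proof -
  let ?M = "(A \<inter> B) \<union> (A \<inter> C) \<union> (B \<inter> C)"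
  have "?M = (A \<inter> B) \<union> (sym_diff A B \<inter> C)" by auto
  hence left: "(\<Prod>a\<in>A \<inter> B. sg a) * (\<Prod>a\<in>sym_diff A B \<inter> C. sg a) = (\<Prod>a\<in>?M. sg a)"
    using assms by simp (intro prod.union_disjoint[symmetric]; auto)
  have "?M = (A \<inter> sym_diff B C) \<union> (B \<inter> C)" by auto
  hence right: "(\<Prod>a\<in>A \<inter> sym_diff B C. sg a) * (\<Prod>a\<in>B \<inter> C. sg a) = (\<Prod>a\<in>?M. sg a)"
    using assms by simp (intro prod.union_disjoint[symmetric]; auto)
  have signs: "order_sign A B * order_sign (sym_diff A B) C
      = (order_sign A (sym_diff B C) * order_sign B C :: 'a)"
    using assms by (simp add: order_sign_sym_diff_left order_sign_sym_diff_right mult_ac)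
  have "blade_sign sg A B * blade_sign sg (sym_diff A B) C
      = (order_sign A B * order_sign (sym_diff A B) C) *
        ((\<Prod>a\<in>A \<inter> B. sg a) * (\<Prod>a\<in>sym_diff A B \<inter> C. sg a))"
    using assms by (simp add: blade_sign_eq mult_ac)
  also have "\<dots> = (order_sign A (sym_diff B C) * order_sign B C) *
        ((\<Prod>a\<in>A \<inter> sym_diff B C. sg a) * (\<Prod>a\<in>B \<inter> C. sg a))"
    unfolding signs left right ..
  also have "\<dots> = blade_sign sg A (sym_diff B C) * blade_sign sg B C"
    using assms by (simp add: blade_sign_eq mult_ac)
  finally show ?thesis .
qed

lemma card_inversions_self:
  assumes "finite (A::nat set)"
  shows "card {(a,b). a \<in> A \<and> b \<in> A \<and> b < a} = card A * (card A - 1) div 2"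
proof -
  let ?S = "{(a,b). a \<in> A \<and> b \<in> A \<and> b < a}"
  let ?T = "{(a,b). a \<in> A \<and> b \<in> A \<and> a < b}"
  let ?D = "{(a,b). a \<in> A \<and> b \<in> A \<and> a = b}"
  have fin: "finite ?S" "finite ?T" "finite ?D"
    by (rule finite_subset[of _ "A \<times> A"], auto simp: assms)+
  have split: "A \<times> A = ?S \<union> ?T \<union> ?D" by (auto simp: not_less_iff_gr_or_eq)
  have "card (A \<times> A) = card ?S + card ?T + card ?D"
    unfolding split using fin by (subst card_Un_disjoint, auto simp: card_Un_disjoint)+
  moreover have "card ?T = card ?S"
  proof -
    have "?T = (\<lambda>(a,b). (b,a)) ` ?S" by auto
    moreover have "inj_on (\<lambda>(a,b). (b,a)) ?S" by (auto simp: inj_on_def)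
    ultimately show ?thesis by (simp add: card_image)
  qed
  moreover have "card ?D = card A"
  proof -
    have "?D = (\<lambda>a. (a,a)) ` A" by auto
    thus ?thesis by (simp add: card_image inj_on_def)
  qed
  ultimately have "card A * (card A - 1) = 2 * card ?S"
    by (simp add: card_cartesian_product diff_mult_distrib2)
  thus ?thesis by simp
qed

lemma reversion_sign_eq:
  "finite (A::nat set) \<Longrightarrow> (-1::'a::field) ^ (card A * (card A - 1) div 2) = order_sign A A"
  using power_card_inversions[of A A] by (simp add: card_inversions_self)

lemma order_sign_swap:
  assumes "A \<subseteq> B" "finite B"
  shows "order_sign A B * order_sign B A = ((-1) ^ ((card B - 1) * card A) :: 'a::field)"
proof -
  have "order_sign B A = (\<Prod>a\<in>A. \<Prod>b\<in>B. if a < b then -1 else 1 :: 'a)"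
    unfolding order_sign_def by (rule prod.swap)
  hence "order_sign A B * order_sign B A = (\<Prod>a\<in>A. \<Prod>b\<in>B. if a = b then 1 else -1 :: 'a)"
    unfolding order_sign_def
    by (simp add: prod.distrib[symmetric] del: prod.distrib) (intro prod.cong refl, auto)
  also have "\<dots> = (\<Prod>a\<in>A. (-1::'a) ^ (card B - 1))"
  proof (rule prod.cong[OF refl])
    fix a assume a: "a \<in> A"
    have "(\<Prod>b\<in>B. if a = b then 1 else -1 :: 'a) = (\<Prod>b\<in>B - {a}. if a = b then 1 else -1)"
      using a assms by (intro prod.mono_neutral_right) auto
    also have "\<dots> = (\<Prod>b\<in>B - {a}. -1)" by (intro prod.cong) auto
    finally show "(\<Prod>b\<in>B. if a = b then 1 else -1 :: 'a) = (-1) ^ (card B - 1)"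
      using a assms by auto
  qed
  finally show ?thesis by (simp add: power_mult[symmetric])
qed

lemma blade_sign_square:
  assumes "finite S" "\<And>a. sg a * sg a = 1"
  shows "blade_sign sg S S * blade_sign sg S S = (1::'a::field)"
proof -
  have "blade_sign sg S S * blade_sign sg S S
      = (order_sign S S * order_sign S S) * ((\<Prod>a\<in>S. sg a) * (\<Prod>a\<in>S. sg a))"
    using assms by (simp add: blade_sign_eq mult_ac)
  thus ?thesis using assms by (simp add: order_sign_square prod_square_eq_one)
qed

lemma blade_sign_reverse:
  assumes "finite A" "finite B"
  shows "order_sign (sym_diff A B) (sym_diff A B) * blade_sign sg A B
       = (order_sign A A * order_sign B B * blade_sign sg B A :: 'a::field)"
proof -
  have "order_sign (sym_diff A B) (sym_diff A B)
      = (order_sign A A * order_sign A B * (order_sign B A * order_sign B B) :: 'a)"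
    using assms by (simp add: order_sign_sym_diff_left order_sign_sym_diff_right)
  moreover have "A \<inter> B = B \<inter> A" by auto
  ultimately have "order_sign (sym_diff A B) (sym_diff A B) * blade_sign sg A B
     = order_sign A A * order_sign B B * (order_sign B A * (\<Prod>a\<in>B \<inter> A. sg a))
       * (order_sign A B * order_sign A B)"
    using assms by (simp add: blade_sign_eq mult_ac)
  also have "\<dots> = order_sign A A * order_sign B B * (order_sign B A * (\<Prod>a\<in>B \<inter> A. sg a))"
    by (simp only: order_sign_square mult_1_right)
  finally show ?thesis using assms by (simp add: blade_sign_eq)
qed

section \<open>The Clifford product\<close>

lemma sum_Pow_sym_diff_collapse:
  fixes g :: "nat set \<Rightarrow> nat set \<Rightarrow> nat set \<Rightarrow> 'a::comm_monoid_add"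
  assumes "finite N"
  shows "(\<Sum>D\<in>Pow N. \<Sum>A\<in>Pow N. \<Sum>B\<in>Pow N. if sym_diff A B = D then g A B D else 0)
       = (\<Sum>A\<in>Pow N. \<Sum>B\<in>Pow N. g A B (sym_diff A B))"
proof -
  have "(\<Sum>D\<in>Pow N. \<Sum>A\<in>Pow N. \<Sum>B\<in>Pow N. if sym_diff A B = D then g A B D else 0)
      = (\<Sum>A\<in>Pow N. \<Sum>B\<in>Pow N. \<Sum>D\<in>Pow N. if sym_diff A B = D then g A B D else 0)"
    by (subst sum.swap) (rule sum.cong[OF refl], rule sum.swap)
  also have "\<dots> = (\<Sum>A\<in>Pow N. \<Sum>B\<in>Pow N. g A B (sym_diff A B))"
    by (intro sum.cong refl) (auto simp: sum.delta' assms)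
  finally show ?thesis .
qed

lemma cl_mult_assoc:
  "cl_mult sg n (cl_mult sg n x y) z = cl_mult sg n x (cl_mult sg n y z)"
proof
  fix C
  let ?P = "Pow {..<n}"
  let ?b = "blade_sign sg"
  let ?G = "\<lambda>A B E. if sym_diff (sym_diff A B) E = C
                     then ?b A B * ?b (sym_diff A B) E * x A * y B * z E else 0"
  have "cl_mult sg n (cl_mult sg n x y) z C =
     (\<Sum>D\<in>?P. \<Sum>E\<in>?P. \<Sum>A\<in>?P. \<Sum>B\<in>?P. if sym_diff A B = D then
        (if sym_diff D E = C then ?b D E * ?b A B * x A * y B * z E else 0) else 0)"
    unfolding cl_mult_def
    by (intro sum.cong refl)
      (simp add: sum_distrib_left sum_distrib_right if_distrib mult_ac cong: if_cong)
  also have "\<dots> = (\<Sum>D\<in>?P. \<Sum>A\<in>?P. \<Sum>B\<in>?P. \<Sum>E\<in>?P. if sym_diff A B = D then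
        (if sym_diff D E = C then ?b D E * ?b A B * x A * y B * z E else 0) else 0)"
    by (rule sum.cong[OF refl], rule trans[OF sum.swap], rule sum.cong[OF refl], rule sum.swap)
  also have "\<dots> = (\<Sum>D\<in>?P. \<Sum>A\<in>?P. \<Sum>B\<in>?P. if sym_diff A B = D then
        (\<Sum>E\<in>?P. if sym_diff D E = C then ?b D E * ?b A B * x A * y B * z E else 0) else 0)"
    by (intro sum.cong refl) auto
  also have "\<dots> = (\<Sum>A\<in>?P. \<Sum>B\<in>?P. \<Sum>E\<in>?P. ?G A B E)"
    by (subst sum_Pow_sym_diff_collapse) (auto simp: mult_ac intro!: sum.cong)
  also have "\<dots> = (\<Sum>A\<in>?P. \<Sum>B\<in>?P. \<Sum>E\<in>?P. if sym_diff A (sym_diff B E) = C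
                   then ?b A (sym_diff B E) * ?b B E * x A * y B * z E else 0)"
  proof (intro sum.cong refl)
    fix A B E assume "A \<in> ?P" "B \<in> ?P" "E \<in> ?P"
    hence "finite A" "finite B" "finite E" by (auto intro: finite_subset)
    moreover have "sym_diff A (sym_diff B E) = sym_diff (sym_diff A B) E" by auto
    ultimately show "?G A B E = (if sym_diff A (sym_diff B E) = C
                   then ?b A (sym_diff B E) * ?b B E * x A * y B * z E else 0)"
      using blade_sign_cocycle[of A B E sg] by (simp add: mult_ac)
  qed
  also have "\<dots> = (\<Sum>A\<in>?P. \<Sum>F\<in>?P. \<Sum>B\<in>?P. \<Sum>E\<in>?P. if sym_diff B E = F then
        (if sym_diff A F = C then ?b A F * ?b B E * x A * y B * z E else 0) else 0)"
    by (intro sum.cong refl sum_Pow_sym_diff_collapse[symmetric]) simp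
  also have "\<dots> = cl_mult sg n x (cl_mult sg n y z) C"
    unfolding cl_mult_def
    by (intro sum.cong refl)
      (simp add: sum_distrib_left sum_distrib_right if_distrib mult_ac cong: if_cong)
  finally show "cl_mult sg n (cl_mult sg n x y) z C = cl_mult sg n x (cl_mult sg n y z) C" .
qed

lemma cl_mult_clif: "cl_mult sg n x y \<in> clif n"
  unfolding clif_def cl_mult_def by (auto intro!: sum.neutral)

lemma cl_one_clif: "cl_one \<in> clif n"
  unfolding clif_def cl_one_def by auto

lemma cl_hat_clif: "x \<in> clif n \<Longrightarrow> cl_hat x \<in> clif n"
  unfolding clif_def cl_hat_def by auto

lemma cl_rev_clif: "x \<in> clif n \<Longrightarrow> cl_rev x \<in> clif n"
  unfolding clif_def cl_rev_def by auto

lemma cl_mult_apply: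
  "cl_mult sg n x y C = (if C \<subseteq> {..<n}
     then \<Sum>A\<in>Pow {..<n}. blade_sign sg A (sym_diff A C) * x A * y (sym_diff A C) else 0)"
proof (cases "C \<subseteq> {..<n}")
  case True
  have "cl_mult sg n x y C = (\<Sum>A\<in>Pow {..<n}. blade_sign sg A (sym_diff A C) * x A * y (sym_diff A C))"
    unfolding cl_mult_def
  proof (rule sum.cong[OF refl])
    fix A assume "A \<in> Pow {..<n}"
    hence "sym_diff A C \<in> Pow {..<n}" using True by auto
    moreover have "\<And>B. sym_diff A B = C \<longleftrightarrow> B = sym_diff A C" by auto
    ultimately show "(\<Sum>B\<in>Pow {..<n}. if sym_diff A B = C then blade_sign sg A B * x A * y B else 0)
        = blade_sign sg A (sym_diff A C) * x A * y (sym_diff A C)"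
      by (simp add: sum.delta' cong: if_cong)
  qed
  thus ?thesis using True by simp
next
  case False
  hence "\<And>A B. A \<subseteq> {..<n} \<Longrightarrow> B \<subseteq> {..<n} \<Longrightarrow> sym_diff A B \<noteq> C" by auto
  thus ?thesis unfolding cl_mult_def using False by (auto intro!: sum.neutral)
qed

lemma cl_mult_one_left:
  assumes "x \<in> clif n"
  shows "cl_mult sg n cl_one x = x"
proof
  fix C
  have "\<And>A. blade_sign sg A (sym_diff A C) * cl_one A * x (sym_diff A C) = (if A = {} then x C else 0)"
    by (simp add: cl_one_def blade_sign_def)
  thus "cl_mult sg n cl_one x C = x C"
    using assms by (simp add: cl_mult_apply sum.delta' clif_def)
qed

lemma cl_mult_one_right:
  assumes "x \<in> clif n"
  shows "cl_mult sg n x cl_one = x"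
proof
  fix C :: "nat set"
  have "\<And>A. sym_diff A C = {} \<longleftrightarrow> A = C" by auto
  hence "\<And>A. blade_sign sg A (sym_diff A C) * x A * cl_one (sym_diff A C) = (if A = C then x C else 0)"
    by (simp add: cl_one_def blade_sign_def)
  thus "cl_mult sg n x cl_one C = x C"
    using assms by (simp add: cl_mult_apply sum.delta' clif_def)
qed

lemma cl_mult_zero_left: "cl_mult sg n (\<lambda>_. 0) y = (\<lambda>_. 0)"
  unfolding cl_mult_def by (simp cong: if_cong)

lemma cl_mult_zero_right: "cl_mult sg n y (\<lambda>_. 0) = (\<lambda>_. 0)"
  unfolding cl_mult_def by (simp cong: if_cong)

lemma cl_mult_scale_left: "cl_mult sg n (\<lambda>A. c * x A) z = (\<lambda>C. c * cl_mult sg n x z C)"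
  unfolding cl_mult_def by (auto simp: sum_distrib_left algebra_simps intro!: sum.cong)

lemma cl_mult_scale_right: "cl_mult sg n z (\<lambda>A. c * x A) = (\<lambda>C. c * cl_mult sg n z x C)"
  unfolding cl_mult_def by (auto simp: sum_distrib_left algebra_simps intro!: sum.cong)

lemma cl_hat_mult: "cl_hat (cl_mult sg n x y) = cl_mult sg n (cl_hat x) (cl_hat y)"
proof
  fix C
  show "cl_hat (cl_mult sg n x y) C = cl_mult sg n (cl_hat x) (cl_hat y) C"
    unfolding cl_hat_def cl_mult_def sum_distrib_left
  proof (intro sum.cong refl)
    fix A B assume "A \<in> Pow {..<n}" "B \<in> Pow {..<n}"
    hence "finite A" "finite B" by (auto intro: finite_subset)
    hence "prod (\<lambda>_. -1::'a) (sym_diff A B) = prod (\<lambda>_. -1) A * prod (\<lambda>_. -1) B"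
      by (intro prod_sym_diff) simp_all
    hence "(-1::'a) ^ card (sym_diff A B) = (-1) ^ card A * (-1) ^ card B" by simp
    thus "(-1) ^ card C * (if sym_diff A B = C then blade_sign sg A B * x A * y B else 0) =
         (if sym_diff A B = C
          then blade_sign sg A B * ((-1) ^ card A * x A) * ((-1) ^ card B * y B) else 0)"
      by (auto simp: mult_ac)
  qed
qed

lemma cl_rev_mult: "cl_rev (cl_mult sg n x y) = cl_mult sg n (cl_rev y) (cl_rev x)"
proof
  fix C
  let ?r = "\<lambda>A::nat set. (-1::'a) ^ (card A * (card A - 1) div 2)"
  have "cl_rev (cl_mult sg n x y) C = (\<Sum>A\<in>Pow {..<n}. \<Sum>B\<in>Pow {..<n}.
     ?r C * (if sym_diff A B = C then blade_sign sg A B * x A * y B else 0))"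
    unfolding cl_rev_def cl_mult_def sum_distrib_left by simp
  also have "\<dots> = (\<Sum>A\<in>Pow {..<n}. \<Sum>B\<in>Pow {..<n}.
     if sym_diff B A = C then blade_sign sg B A * (?r B * y B) * (?r A * x A) else 0)"
  proof (intro sum.cong refl)
    fix A B assume "A \<in> Pow {..<n}" "B \<in> Pow {..<n}"
    hence fin: "finite A" "finite B" by (auto intro: finite_subset)
    hence signs: "?r (sym_diff A B) = order_sign (sym_diff A B) (sym_diff A B)"
      "?r A = order_sign A A" "?r B = order_sign B B"
      by (simp_all only: reversion_sign_eq finite_UnI finite_Diff)
    have "?r (sym_diff A B) * (blade_sign sg A B * x A * y B)
        = order_sign (sym_diff A B) (sym_diff A B) * blade_sign sg A B * (x A * y B)"
      unfolding signs by (simp add: mult_ac)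
    also have "\<dots> = blade_sign sg B A * (?r B * y B) * (?r A * x A)"
      unfolding blade_sign_reverse[OF fin] signs by (simp add: mult_ac)
    finally have "?r (sym_diff A B) * (blade_sign sg A B * x A * y B)
        = blade_sign sg B A * (?r B * y B) * (?r A * x A)" .
    moreover have "sym_diff B A = sym_diff A B" by auto
    ultimately show "?r C * (if sym_diff A B = C then blade_sign sg A B * x A * y B else 0)
      = (if sym_diff B A = C then blade_sign sg B A * (?r B * y B) * (?r A * x A) else 0)"
      by auto
  qed
  also have "\<dots> = cl_mult sg n (cl_rev y) (cl_rev x) C"
    unfolding cl_mult_def cl_rev_def by (rule sum.swap)
  finally show "cl_rev (cl_mult sg n x y) C = cl_mult sg n (cl_rev y) (cl_rev x) C" .
qed

lemma cl_hat_hat: "cl_hat (cl_hat x) = x"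
  unfolding cl_hat_def by (auto simp: power_mult_distrib[symmetric] mult.assoc[symmetric])

lemma cl_rev_rev: "cl_rev (cl_rev x) = x"
  unfolding cl_rev_def by (auto simp: power_mult_distrib[symmetric] mult.assoc[symmetric])

lemma cl_hat_rev: "cl_hat (cl_rev x) = cl_rev (cl_hat x)"
  unfolding cl_hat_def cl_rev_def by (auto simp: mult_ac)

lemma cl_hat_one: "cl_hat cl_one = cl_one"
  unfolding cl_hat_def cl_one_def by auto

lemma cl_rev_one: "cl_rev cl_one = cl_one"
  unfolding cl_rev_def cl_one_def by auto

lemma cl_rev_scale: "cl_rev (\<lambda>A. c * x A) = (\<lambda>A. c * cl_rev x A)"
  unfolding cl_rev_def by (auto simp: mult_ac)

section \<open>Elements of the form a + b e_S\<close>

definition scal_blade :: "nat set \<Rightarrow> 'a::field \<Rightarrow> 'a \<Rightarrow> nat set \<Rightarrow> 'a" where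
  "scal_blade S a b = (\<lambda>A. if A = {} then a else if A = S then b else 0)"

lemma scal_blade_other: "A \<noteq> {} \<Longrightarrow> A \<noteq> S \<Longrightarrow> scal_blade S a b A = 0"
  unfolding scal_blade_def by simp

lemma scal_blade_scalar_other: "A \<noteq> {} \<Longrightarrow> scal_blade S a 0 A = 0"
  unfolding scal_blade_def by simp

lemma scal_blade_clif: "S \<subseteq> {..<n} \<Longrightarrow> scal_blade S a b \<in> clif n"
  unfolding clif_def scal_blade_def by auto

lemma scal_blade_eq_iff: "S \<noteq> {} \<Longrightarrow> scal_blade S a b = scal_blade S c d \<longleftrightarrow> a = c \<and> b = d"
  by (metis scal_blade_def)

lemma cl_one_eq_scal_blade: "S \<noteq> {} \<Longrightarrow> cl_one = scal_blade S 1 0"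
  unfolding scal_blade_def cl_one_def by auto

lemma cl_hat_scal_blade: "cl_hat (scal_blade S a b) = scal_blade S a ((-1) ^ card S * b)"
  unfolding cl_hat_def scal_blade_def by auto

lemma cl_rev_scal_blade:
  "cl_rev (scal_blade S a b) = scal_blade S a ((-1) ^ (card S * (card S - 1) div 2) * b)"
  unfolding cl_rev_def scal_blade_def by auto

lemma cl_mult_scal_blade_left:
  assumes "S \<subseteq> {..<n}" "S \<noteq> {}"
  shows "cl_mult sg n (scal_blade S a b) y C = (if C \<subseteq> {..<n}
     then a * y C + b * blade_sign sg S (sym_diff S C) * y (sym_diff S C) else 0)"
proof (cases "C \<subseteq> {..<n}")
  case True
  let ?f = "\<lambda>A. blade_sign sg A (sym_diff A C) * scal_blade S a b A * y (sym_diff A C)"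
  have "sum ?f (Pow {..<n}) = sum ?f {{}, S}"
    using assms by (intro sum.mono_neutral_right) (auto simp: scal_blade_def)
  also have "\<dots> = a * y C + b * blade_sign sg S (sym_diff S C) * y (sym_diff S C)"
    using assms by (simp add: scal_blade_def blade_sign_def)
  finally show ?thesis using True by (simp add: cl_mult_apply)
qed (simp add: cl_mult_apply)

lemma cl_mult_scal_blade_right:
  assumes "S \<subseteq> {..<n}" "S \<noteq> {}"
  shows "cl_mult sg n y (scal_blade S a b) C = (if C \<subseteq> {..<n}
     then y C * a + blade_sign sg (sym_diff S C) S * y (sym_diff S C) * b else 0)"
proof (cases "C \<subseteq> {..<n}")
  case True
  let ?f = "\<lambda>A. blade_sign sg A (sym_diff A C) * y A * scal_blade S a b (sym_diff A C)"
  have iff: "\<And>A. sym_diff A C = {} \<longleftrightarrow> A = C" "\<And>A. sym_diff A C = S \<longleftrightarrow> A = sym_diff S C"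
    by auto
  have "sum ?f (Pow {..<n}) = sum ?f {C, sym_diff S C}"
    using assms True by (intro sum.mono_neutral_right) (auto simp: scal_blade_def iff)
  also have "\<dots> = ?f C + ?f (sym_diff S C)"
  proof -
    have "C \<noteq> sym_diff S C" using assms by auto
    thus ?thesis by (subst sum.insert) auto
  qed
  also have "\<dots> = y C * a + blade_sign sg (sym_diff S C) S * y (sym_diff S C) * b"
  proof -
    have "sym_diff C C = {}" "sym_diff (sym_diff S C) C = S" by auto
    thus ?thesis using assms unfolding scal_blade_def blade_sign_def by simp
  qed
  finally show ?thesis using True by (simp add: cl_mult_apply)
qed (simp add: cl_mult_apply)

lemma scal_blade_mult:
  assumes "S \<subseteq> {..<n}" "S \<noteq> {}"
  shows "cl_mult sg n (scal_blade S a b) (scal_blade S c d)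
       = scal_blade S (a * c + blade_sign sg S S * b * d) (a * d + b * c)"
proof
  fix C
  have "sym_diff S {} = S" "sym_diff S S = {}" by auto
  moreover have "C \<noteq> {} \<Longrightarrow> C \<noteq> S \<Longrightarrow> sym_diff S C \<noteq> {} \<and> sym_diff S C \<noteq> S" by auto
  ultimately show "cl_mult sg n (scal_blade S a b) (scal_blade S c d) C
       = scal_blade S (a * c + blade_sign sg S S * b * d) (a * d + b * c) C"
    unfolding cl_mult_scal_blade_left[OF assms] using assms
    by (auto simp: scal_blade_def blade_sign_def mult_ac)
qed

lemma scal_blade_inverse:
  assumes S: "S \<subseteq> {..<n}" "S \<noteq> {}" and d: "a * a - blade_sign sg S S * b * b = d" "d \<noteq> 0"
  shows "cl_mult sg n (scal_blade S a b) (scal_blade S (a / d) (- b / d)) = cl_one"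
    and "cl_mult sg n (scal_blade S (a / d) (- b / d)) (scal_blade S a b) = cl_one"
proof -
  have "a * (a / d) + blade_sign sg S S * b * (- b / d) = (a * a - blade_sign sg S S * b * b) / d"
    by (simp add: diff_divide_distrib)
  hence scalar: "a * (a / d) + blade_sign sg S S * b * (- b / d) = 1"
    "a / d * a + blade_sign sg S S * (- b / d) * b = 1"
    using d by (simp_all add: mult_ac)
  have pseudo: "a * (- b / d) + b * (a / d) = 0" "a / d * b + - b / d * a = 0"
    by (simp_all add: mult.commute)
  show "cl_mult sg n (scal_blade S a b) (scal_blade S (a / d) (- b / d)) = cl_one"
    "cl_mult sg n (scal_blade S (a / d) (- b / d)) (scal_blade S a b) = cl_one"
    unfolding scal_blade_mult[OF S] cl_one_eq_scal_blade[OF S(2)] scalar pseudo by simp_all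
qed

section \<open>Grade involution, reversion and parity\<close>

lemma square_eq_one_cases: "(s::'a::field) * s = 1 \<Longrightarrow> s = 1 \<or> s = -1"
  by (metis square_eq_1_iff power2_eq_square)

lemma cl_even_iff_hat:
  "(x :: nat set \<Rightarrow> 'a::field_char_0) \<in> cl_even n \<longleftrightarrow> x \<in> clif n \<and> cl_hat x = x"
proof -
  have "\<And>A. (odd (card A) \<longrightarrow> x A = 0) \<longleftrightarrow> (-1) ^ card A * x A = x A"
    by (case_tac "even (card A)") (auto simp: neg_eq_iff_add_eq_0 simp flip: mult_2)
  thus ?thesis unfolding cl_even_def cl_hat_def fun_eq_iff by blast
qed

lemma cl_odd_iff_hat:
  "(x :: nat set \<Rightarrow> 'a::field_char_0) \<in> cl_odd n \<longleftrightarrow> x \<in> clif n \<and> cl_hat x = (\<lambda>A. - x A)"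
proof -
  have "\<And>A. (even (card A) \<longrightarrow> x A = 0) \<longleftrightarrow> (-1) ^ card A * x A = - x A"
    by (case_tac "even (card A)") (auto simp: eq_neg_iff_add_eq_0 simp flip: mult_2)
  thus ?thesis unfolding cl_odd_def cl_hat_def fun_eq_iff by blast
qed

lemma reversion_exponent_odd:
  assumes "(n::nat) mod 4 = 2"
  shows "odd (n * (n - 1) div 2)"
proof -
  obtain k where k: "n = 4 * k + 2" using assms by (metis div_mult_mod_eq mult.commute)
  have "n * (n - 1) = 2 * ((2 * k + 1) * (4 * k + 1))" unfolding k by (simp add: algebra_simps)
  thus ?thesis by simp
qed

lemma reversion_exponent_even:
  assumes "(n::nat) mod 4 = 0"
  shows "even (n * (n - 1) div 2)"
proof -
  obtain k where k: "n = 4 * k" using assms by blast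
  have "n * (n - 1) div 2 = 2 * (k * (n - 1))" unfolding k by simp
  thus ?thesis by simp
qed

text \<open>Grades 1 and 3 are killed by the grade involution, grade 2 by reversion.\<close>

lemma scal_pseudo_if_hat_rev_fixed:
  fixes x :: "nat set \<Rightarrow> 'a::field_char_0"
  assumes "n = 4" "x \<in> clif n" "cl_hat x = x" "cl_rev x = x"
  shows "x \<in> cl_scal_pseudo n"
  unfolding cl_scal_pseudo_def
proof (intro CollectI conjI allI impI)
  fix A :: "nat set" assume A: "A \<noteq> {} \<and> A \<noteq> {..<n}"
  show "x A = 0"
  proof (cases "A \<subseteq> {..<n}")
    case True
    hence "card A \<noteq> 0" "card A \<noteq> 4" "card A \<le> 4"
      using A assms(1) card_subset_eq[of "{..<n}" A] card_mono[OF _ True] finite_subset[OF True]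
      by auto
    hence "odd (card A) \<or> card A = 2" by presburger
    hence "- x A = x A"
      using fun_cong[OF assms(3), of A] fun_cong[OF assms(4), of A]
      unfolding cl_hat_def cl_rev_def by auto
    thus ?thesis by (simp add: neg_eq_iff_add_eq_0 flip: mult_2)
  qed (use assms(2) in \<open>auto simp: clif_def\<close>)
qed (rule assms(2))

section \<open>Diagonal metrics with entries 1 and -1\<close>

locale diag_clifford =
  fixes sg :: "nat \<Rightarrow> 'a::field_char_0" and n :: nat
  assumes sg_square: "\<And>a. sg a * sg a = 1" and two_le_n: "2 \<le> n"
begin

abbreviation mult (infixl "\<star>" 70) where "x \<star> y \<equiv> cl_mult sg n x y"
abbreviation invertible where "invertible \<equiv> cl_invertible sg n"
abbreviation units where "units \<equiv> cl_units sg n"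
abbreviation N where "N \<equiv> {..<n}"

definition pseudo_square :: 'a where "pseudo_square = blade_sign sg N N"

lemma N_nonempty: "N \<noteq> {}"
proof -
  have "0 \<in> N" using two_le_n by simp
  thus ?thesis by blast
qed

lemma pseudo_square_cases: "pseudo_square = 1 \<or> pseudo_square = -1"
  unfolding pseudo_square_def by (intro square_eq_one_cases blade_sign_square sg_square) simp

lemma pseudo_mult: "scal_blade N a b \<star> scal_blade N c d
    = scal_blade N (a * c + pseudo_square * b * d) (a * d + b * c)"
  unfolding pseudo_square_def by (simp add: scal_blade_mult N_nonempty mult_ac)

lemma invertible_clif: "invertible x \<Longrightarrow> x \<in> clif n"
  unfolding cl_invertible_def by auto

lemma invertibleE:
  assumes "invertible x"
  obtains y where "y \<in> clif n" "x \<star> y = cl_one" "y \<star> x = cl_one" "invertible y"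
  using assms unfolding cl_invertible_def by blast

lemma mult_cancel_left_inverse: "a \<star> b = cl_one \<Longrightarrow> x \<in> clif n \<Longrightarrow> a \<star> (b \<star> x) = x"
  by (simp add: cl_mult_assoc[symmetric] cl_mult_one_left)

lemma invertible_mult:
  assumes "invertible x" "invertible y"
  shows "invertible (x \<star> y)"
proof -
  obtain x' where x': "x' \<in> clif n" "x \<star> x' = cl_one" "x' \<star> x = cl_one"
    using assms(1) by (rule invertibleE)
  obtain y' where y': "y' \<in> clif n" "y \<star> y' = cl_one" "y' \<star> y = cl_one"
    using assms(2) by (rule invertibleE)
  have "(x \<star> y) \<star> (y' \<star> x') = cl_one"
    using x' y' by (simp add: cl_mult_assoc mult_cancel_left_inverse)
  moreover have "(y' \<star> x') \<star> (x \<star> y) = cl_one"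
    using x' y' assms(2) invertible_clif by (simp add: cl_mult_assoc mult_cancel_left_inverse)
  ultimately show ?thesis unfolding cl_invertible_def using cl_mult_clif by blast
qed

lemma invertible_hat: "invertible x \<Longrightarrow> invertible (cl_hat x)"
  unfolding cl_invertible_def by (metis cl_hat_clif cl_hat_mult cl_hat_one)

lemma invertible_rev: "invertible x \<Longrightarrow> invertible (cl_rev x)"
  unfolding cl_invertible_def by (metis cl_rev_clif cl_rev_mult cl_rev_one)

lemma invertible_cancel_left:
  assumes "invertible t" "a \<in> clif n" "b \<in> clif n" "t \<star> a = t \<star> b"
  shows "a = b"
proof -
  obtain t' where t': "t' \<star> t = cl_one" using assms(1) by (rule invertibleE)
  have "a = t' \<star> (t \<star> a)" using t' assms(2) by (simp add: cl_mult_assoc[symmetric] cl_mult_one_left)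
  also have "\<dots> = b" using t' assms(3,4) by (simp add: cl_mult_assoc[symmetric] cl_mult_one_left)
  finally show ?thesis .
qed

lemma not_invertible_zero: "\<not> invertible (\<lambda>_. 0)"
proof
  assume "invertible (\<lambda>_. 0)"
  then obtain y where "(\<lambda>_. 0) \<star> y = cl_one" by (rule invertibleE)
  hence "(0::'a) = cl_one {}" by (metis cl_mult_zero_left)
  thus False unfolding cl_one_def by simp
qed

lemma invertible_scal_blade_iff:
  assumes S: "S \<subseteq> N" "S \<noteq> {}"
  shows "invertible (scal_blade S a b) \<longleftrightarrow> a * a - blade_sign sg S S * b * b \<noteq> 0"
proof
  let ?s = "blade_sign sg S S"
  assume inv: "invertible (scal_blade S a b)"
  have zero_clif: "(\<lambda>_. 0) \<in> clif n" by (simp add: clif_def)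
  show "a * a - ?s * b * b \<noteq> 0"
  proof
    assume "a * a - ?s * b * b = 0"
    hence "scal_blade S a b \<star> scal_blade S a (-b) = (\<lambda>_. 0)"
      unfolding scal_blade_mult[OF S] by (auto simp: scal_blade_def algebra_simps)
    hence "scal_blade S a b \<star> scal_blade S a (-b) = scal_blade S a b \<star> (\<lambda>_. 0)"
      by (simp add: cl_mult_zero_right)
    hence "scal_blade S a (-b) = (\<lambda>_. 0)"
      by (rule invertible_cancel_left[OF inv scal_blade_clif[OF S(1)] zero_clif])
    hence "scal_blade S a b = (\<lambda>_. 0)"
      using S(2) by (auto simp: scal_blade_def fun_eq_iff split: if_splits)
    thus False using inv not_invertible_zero by simp
  qed
next
  assume "a * a - blade_sign sg S S * b * b \<noteq> 0"
  thus "invertible (scal_blade S a b)"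
    unfolding cl_invertible_def using scal_blade_inverse[OF S refl] scal_blade_clif[OF S(1)] by blast
qed

lemma invertible_pseudo_iff: "invertible (scal_blade N a b) \<longleftrightarrow> a * a - pseudo_square * b * b \<noteq> 0"
  unfolding pseudo_square_def by (rule invertible_scal_blade_iff[OF subset_refl N_nonempty])

lemma pseudo_inverse:
  assumes "a * a - pseudo_square * b * b = d" "d \<noteq> 0"
  shows "scal_blade N (a / d) (- b / d) \<star> scal_blade N a b = cl_one"
    and "invertible (scal_blade N (a / d) (- b / d))"
proof -
  note inv = scal_blade_inverse[OF subset_refl N_nonempty assms[unfolded pseudo_square_def]]
  show "scal_blade N (a / d) (- b / d) \<star> scal_blade N a b = cl_one" by (rule inv(2))
  show "invertible (scal_blade N (a / d) (- b / d))"
    unfolding cl_invertible_def using inv scal_blade_clif[OF subset_refl] by blast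
qed

lemma scal_pseudo_iff: "x \<in> cl_scal_pseudo n \<longleftrightarrow> (\<exists>a b. x = scal_blade N a b)"
proof
  assume "x \<in> cl_scal_pseudo n"
  hence "x = scal_blade N (x {}) (x N)"
    unfolding cl_scal_pseudo_def clif_def scal_blade_def by auto
  thus "\<exists>a b. x = scal_blade N a b" by blast
next
  assume "\<exists>a b. x = scal_blade N a b"
  then obtain a b where "x = scal_blade N a b" by blast
  thus "x \<in> cl_scal_pseudo n"
    unfolding cl_scal_pseudo_def by (simp add: scal_blade_clif scal_blade_other)
qed

lemma center_iff: "x \<in> cl_center n \<longleftrightarrow> (\<exists>a b. x = scal_blade N a b \<and> (even n \<longrightarrow> b = 0))"
proof (cases "even n")
  case True
  have "x \<in> cl_center n \<longleftrightarrow> (\<exists>a. x = scal_blade N a 0)"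
  proof
    assume "x \<in> cl_center n"
    hence "x = scal_blade N (x {}) 0"
      using True unfolding cl_center_def clif_def scal_blade_def by auto
    thus "\<exists>a. x = scal_blade N a 0" by blast
  next
    assume "\<exists>a. x = scal_blade N a 0"
    then obtain a where "x = scal_blade N a 0" by blast
    thus "x \<in> cl_center n"
      unfolding cl_center_def using True by (simp add: scal_blade_clif scal_blade_scalar_other)
  qed
  thus ?thesis using True by auto
qed (simp add: cl_center_def scal_pseudo_iff)

lemma center_subset_scal_pseudo: "cl_center n \<subseteq> cl_scal_pseudo n"
  using center_iff scal_pseudo_iff by auto

lemma units_scal_pseudo_iff:
  "x \<in> units (cl_scal_pseudo n) \<longleftrightarrow>
     (\<exists>a b. x = scal_blade N a b \<and> a * a - pseudo_square * b * b \<noteq> 0)"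
  unfolding cl_units_def scal_pseudo_iff using invertible_pseudo_iff by auto

lemma units_center_iff:
  "x \<in> units (cl_center n) \<longleftrightarrow>
     (\<exists>a b. x = scal_blade N a b \<and> (even n \<longrightarrow> b = 0) \<and> a * a - pseudo_square * b * b \<noteq> 0)"
  unfolding cl_units_def center_iff using invertible_pseudo_iff by auto

lemma scal_pseudo_mult: "x \<in> cl_scal_pseudo n \<Longrightarrow> y \<in> cl_scal_pseudo n \<Longrightarrow> x \<star> y \<in> cl_scal_pseudo n"
  unfolding scal_pseudo_iff using pseudo_mult by blast

lemma scal_pseudo_hat: "x \<in> cl_scal_pseudo n \<Longrightarrow> cl_hat x \<in> cl_scal_pseudo n"
  unfolding scal_pseudo_iff using cl_hat_scal_blade by blast

lemma center_mult: "x \<in> cl_center n \<Longrightarrow> y \<in> cl_center n \<Longrightarrow> x \<star> y \<in> cl_center n"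
  unfolding center_iff using pseudo_mult by fastforce

lemma center_hat: "x \<in> cl_center n \<Longrightarrow> cl_hat x \<in> cl_center n"
  unfolding center_iff using cl_hat_scal_blade by fastforce

lemma center_rev: "x \<in> cl_center n \<Longrightarrow> cl_rev x \<in> cl_center n"
  unfolding center_iff using cl_rev_scal_blade by fastforce

lemma units_scal_pseudo_inverse:
  assumes "x \<in> units (cl_scal_pseudo n)"
  obtains y where "y \<in> cl_scal_pseudo n" "y \<star> x = cl_one"
  using assms pseudo_inverse scal_pseudo_iff unfolding units_scal_pseudo_iff by meson

lemma units_center_inverse:
  assumes "x \<in> units (cl_center n)"
  obtains y where "y \<in> units (cl_center n)" "y \<star> x = cl_one"
proof -
  obtain a b where x: "x = scal_blade N a b" "even n \<longrightarrow> b = 0"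
    and d: "a * a - pseudo_square * b * b \<noteq> 0"
    using assms unfolding units_center_iff by blast
  define d where "d = a * a - pseudo_square * b * b"
  have "scal_blade N (a / d) (- b / d) \<in> cl_center n"
    unfolding center_iff using x(2) by (intro exI[of _ "a / d"] exI[of _ "- b / d"]) simp
  with that show ?thesis using pseudo_inverse[OF d_def[symmetric]] d x(1)
    unfolding cl_units_def d_def by blast
qed

lemma blade_sign_pseudo_swap:
  assumes "D \<subseteq> N"
  shows "blade_sign sg N D = (-1) ^ ((n - 1) * card D) * blade_sign sg D N"
proof -
  have "order_sign D N * order_sign N D = ((-1) ^ ((n - 1) * card D) :: 'a)"
    using order_sign_swap[OF assms] by simp
  hence "order_sign N D = (-1) ^ ((n - 1) * card D) * (order_sign D N :: 'a)"
    by (metis mult.assoc mult.commute mult_1 order_sign_square)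
  moreover have "N \<inter> D = D \<inter> N" by blast
  ultimately show ?thesis using assms by (simp add: blade_sign_eq finite_subset)
qed

lemma center_commute:
  assumes "x \<in> cl_center n" "y \<in> clif n"
  shows "x \<star> y = y \<star> x"
proof
  fix C
  obtain a b where x: "x = scal_blade N a b" "even n \<longrightarrow> b = 0" using assms(1) center_iff by blast
  have swap: "b * blade_sign sg N (sym_diff N C) = blade_sign sg (sym_diff N C) N * b" if "C \<subseteq> N"
  proof (cases "even n")
    case False
    hence "even ((n - 1) * card (sym_diff N C))" using two_le_n by simp
    moreover have "sym_diff N C \<subseteq> N" using that by auto
    ultimately show ?thesis by (simp add: blade_sign_pseudo_swap)
  qed (use x(2) in simp)
  show "(x \<star> y) C = (y \<star> x) C"
    unfolding x(1) cl_mult_scal_blade_left[OF subset_refl N_nonempty]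
      cl_mult_scal_blade_right[OF subset_refl N_nonempty]
    using swap by (auto simp: mult.commute mult.left_commute)
qed

lemma pseudo_anticommute:
  assumes "even n"
  shows "scal_blade N 0 b \<star> y = cl_hat y \<star> scal_blade N 0 b"
proof
  fix C
  have "odd (n - 1)" using assms two_le_n by presburger
  moreover have "C \<subseteq> N \<Longrightarrow> sym_diff N C \<subseteq> N" by auto
  ultimately have "C \<subseteq> N \<Longrightarrow> blade_sign sg N (sym_diff N C)
      = (-1) ^ card (sym_diff N C) * blade_sign sg (sym_diff N C) N"
    by (simp add: blade_sign_pseudo_swap power_mult)
  thus "(scal_blade N 0 b \<star> y) C = (cl_hat y \<star> scal_blade N 0 b) C"
    unfolding cl_mult_scal_blade_left[OF subset_refl N_nonempty]
      cl_mult_scal_blade_right[OF subset_refl N_nonempty] by (simp add: cl_hat_def mult_ac)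
qed

section \<open>The sets P, Q and Q'\<close>

lemma units_even_odd_subset_P:
  assumes "T \<in> units (cl_even n) \<union> units (cl_odd n)"
  shows "T \<in> cl_P sg n"
proof -
  have "cl_one \<in> units (cl_center n)"
    unfolding units_center_iff
    by (intro exI[of _ 1] exI[of _ 0]) (simp add: cl_one_eq_scal_blade[OF N_nonempty])
  hence "cl_one \<star> T \<in> cl_P sg n" unfolding cl_P_def using assms by blast
  moreover have "T \<in> clif n" using assms unfolding cl_units_def cl_even_def cl_odd_def by auto
  ultimately show ?thesis by (simp add: cl_mult_one_left)
qed

lemma P_invertible: "T \<in> cl_P sg n \<Longrightarrow> invertible T"
  unfolding cl_P_def cl_units_def using invertible_mult by blast

lemma mult_scalar_right: "x \<in> clif n \<Longrightarrow> x \<star> scal_blade N a 0 = (\<lambda>C. a * x C)"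
  by (rule ext) (auto simp: cl_mult_scal_blade_right[OF subset_refl N_nonempty] clif_def mult.commute)

lemma hat_eq_mult_scal_pseudo:
  assumes "T \<in> cl_A' sg n \<inter> cl_B' sg n"
  obtains M where "M \<in> cl_scal_pseudo n" "cl_hat T = T \<star> M"
proof -
  define U where "U = cl_rev T \<star> T"
  define V where "V = cl_hat (cl_rev T) \<star> T"
  have T: "invertible T" "T \<in> clif n" and U: "U \<in> cl_scal_pseudo n"
    and V: "V \<in> units (cl_scal_pseudo n)"
    using assms unfolding cl_A'_def cl_B'_def cl_units_def U_def V_def by auto
  obtain T' where T': "T' \<in> clif n" "T \<star> T' = cl_one" "T' \<star> T = cl_one"
    using T(1) by (rule invertibleE)
  obtain V' where V': "V' \<in> cl_scal_pseudo n" "V' \<star> V = cl_one"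
    using V by (rule units_scal_pseudo_inverse)
  define M where "M = T' \<star> cl_hat T"
  have "cl_rev T = U \<star> T'"
    unfolding U_def using T' cl_rev_clif[OF T(2)] by (simp add: cl_mult_assoc cl_mult_one_right)
  hence "V \<star> M = cl_hat U \<star> (cl_hat T' \<star> ((T \<star> T') \<star> cl_hat T))"
    unfolding V_def M_def by (simp add: cl_hat_mult cl_mult_assoc)
  also have "\<dots> = cl_hat U"
  proof -
    have "cl_hat T' \<star> cl_hat T = cl_one" unfolding cl_hat_mult[symmetric] T'(3) cl_hat_one ..
    thus ?thesis using T'(2) cl_hat_clif[OF T(2)]
      by (simp add: cl_mult_one_left cl_mult_one_right[OF cl_hat_clif] U_def cl_mult_clif)
  qed
  finally have VM: "V \<star> M = cl_hat U" .
  have "M = (V' \<star> V) \<star> M" unfolding V'(2) M_def by (simp add: cl_mult_one_left cl_mult_clif)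
  also have "\<dots> = V' \<star> cl_hat U" by (simp add: cl_mult_assoc VM)
  finally have "M \<in> cl_scal_pseudo n" using scal_pseudo_mult[OF V'(1) scal_pseudo_hat[OF U]] by simp
  moreover have "cl_hat T = T \<star> M"
    unfolding M_def using mult_cancel_left_inverse[OF T'(2) cl_hat_clif[OF T(2)]] ..
  ultimately show ?thesis by (rule that)
qed

text \<open>Since e_N anticommutes with odd elements, e_N T = hat(T) e_N = T, so e_N would be 1.\<close>

lemma hat_ne_mult_pseudo:
  assumes "even n" "invertible T" "cl_hat T = T \<star> scal_blade N 0 b"
    and "scal_blade N 0 b \<star> scal_blade N 0 b = cl_one"
  shows False
proof -
  let ?f = "scal_blade N 0 b"
  obtain T' where T': "T \<star> T' = cl_one" using assms(2) by (rule invertibleE)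
  have f_clif: "?f \<in> clif n" and T: "T \<in> clif n"
    using scal_blade_clif[OF subset_refl] invertible_clif[OF assms(2)] by auto
  have "?f \<star> T = T \<star> (?f \<star> ?f)"
    using pseudo_anticommute[OF assms(1)] assms(3) by (simp add: cl_mult_assoc)
  hence "?f \<star> T = T" using assms(4) T by (simp add: cl_mult_one_right)
  hence "?f = cl_one"
    using T' f_clif by (metis cl_mult_assoc cl_mult_one_right)
  thus False using N_nonempty unfolding cl_one_eq_scal_blade[OF N_nonempty] scal_blade_eq_iff[OF N_nonempty]
    by simp
qed

lemma P_if_hat_eq_mult_even:
  assumes "even n" "invertible T" "M \<in> cl_scal_pseudo n" "cl_hat T = T \<star> M"
  shows "T \<in> cl_P sg n"
proof -
  have T: "T \<in> clif n" using assms(2) by (rule invertible_clif)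
  obtain \<alpha> \<beta> where M: "M = scal_blade N \<alpha> \<beta>" using assms(3) scal_pseudo_iff by blast
  have "cl_hat M = M" using assms(1) by (simp add: M cl_hat_scal_blade)
  have "T \<star> cl_one = cl_hat (cl_hat T)" using T by (simp add: cl_mult_one_right cl_hat_hat)
  also have "\<dots> = T \<star> (M \<star> M)"
    unfolding assms(4) cl_hat_mult \<open>cl_hat M = M\<close> by (simp add: cl_mult_assoc)
  finally have "T \<star> cl_one = T \<star> (M \<star> M)" .
  hence "cl_one = M \<star> M" by (rule invertible_cancel_left[OF assms(2) cl_one_clif cl_mult_clif])
  hence MM: "M \<star> M = cl_one" ..
  hence "\<alpha> * \<alpha> + pseudo_square * \<beta> * \<beta> = 1" "2 * (\<alpha> * \<beta>) = 0"
    unfolding M pseudo_mult cl_one_eq_scal_blade[OF N_nonempty] scal_blade_eq_iff[OF N_nonempty]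
    by (simp_all add: mult.commute)
  moreover have "\<alpha> \<noteq> 0"
    using hat_ne_mult_pseudo[OF assms(1,2)] assms(4) MM unfolding M by blast
  ultimately have "\<beta> = 0" "\<alpha> = 1 \<or> \<alpha> = -1" using square_eq_one_cases by auto
  moreover have "cl_hat T = (\<lambda>C. \<alpha> * T C)" if "\<beta> = 0"
    using assms(4) unfolding M that mult_scalar_right[OF T] .
  ultimately have "cl_hat T = T \<or> cl_hat T = (\<lambda>C. - T C)" by auto
  hence "T \<in> units (cl_even n) \<union> units (cl_odd n)"
    using T assms(2) unfolding cl_units_def cl_even_iff_hat cl_odd_iff_hat by blast
  thus ?thesis by (rule units_even_odd_subset_P)
qed

text \<open>W = 1 + hat(M) satisfies M W = M + 1 = hat(W) because M hat(M) = 1; it is a unit unless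
  M = -1, and then W = e_N works.\<close>

lemma center_unit_with_hat_ratio:
  assumes "odd n" "\<alpha> * \<alpha> - pseudo_square * \<beta> * \<beta> = 1"
  obtains W where "W \<in> units (cl_center n)" "scal_blade N \<alpha> \<beta> \<star> W = cl_hat W"
proof (cases "\<alpha> = -1")
  case False
  let ?W = "scal_blade N (1 + \<alpha>) (- \<beta>)"
  have "(1 + \<alpha>) * (1 + \<alpha>) - pseudo_square * (- \<beta>) * (- \<beta>) = 2 * (1 + \<alpha>)"
    using assms(2) by (simp add: algebra_simps)
  hence "?W \<in> units (cl_center n)"
    using False assms(1) unfolding units_center_iff
    by (intro exI[of _ "1 + \<alpha>"] exI[of _ "- \<beta>"]) (auto simp: add_eq_0_iff)
  moreover have "scal_blade N \<alpha> \<beta> \<star> ?W = cl_hat ?W"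
    using assms unfolding pseudo_mult cl_hat_scal_blade by (simp add: algebra_simps)
  ultimately show ?thesis by (rule that)
next
  case True
  hence "pseudo_square * \<beta> * \<beta> = 0" using assms(2) by simp
  hence "\<beta> = 0" using pseudo_square_cases by auto
  let ?W = "scal_blade N 0 1"
  have "?W \<in> units (cl_center n)"
    using assms(1) pseudo_square_cases unfolding units_center_iff
    by (intro exI[of _ 0] exI[of _ 1]) auto
  moreover have "scal_blade N \<alpha> \<beta> \<star> ?W = cl_hat ?W"
    using assms(1) True \<open>\<beta> = 0\<close> unfolding pseudo_mult cl_hat_scal_blade by simp
  ultimately show ?thesis by (rule that)
qed

lemma P_if_hat_eq_mult_odd:
  assumes "odd n" "invertible T" "M \<in> cl_scal_pseudo n" "cl_hat T = T \<star> M"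
  shows "T \<in> cl_P sg n"
proof -
  have T: "T \<in> clif n" using assms(2) by (rule invertible_clif)
  obtain \<alpha> \<beta> where M: "M = scal_blade N \<alpha> \<beta>" using assms(3) scal_pseudo_iff by blast
  have central: "M \<in> cl_center n" using assms(1,3) unfolding cl_center_def by simp
  have "T \<star> cl_one = cl_hat (cl_hat T)" using T by (simp add: cl_mult_one_right cl_hat_hat)
  also have "\<dots> = T \<star> (M \<star> cl_hat M)"
    unfolding assms(4) cl_hat_mult by (simp add: cl_mult_assoc)
  finally have "T \<star> cl_one = T \<star> (M \<star> cl_hat M)" .
  hence "cl_one = M \<star> cl_hat M" by (rule invertible_cancel_left[OF assms(2) cl_one_clif cl_mult_clif])
  hence "\<alpha> * \<alpha> - pseudo_square * \<beta> * \<beta> = 1"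
    using assms(1) unfolding M cl_hat_scal_blade pseudo_mult cl_one_eq_scal_blade[OF N_nonempty]
      scal_blade_eq_iff[OF N_nonempty] by simp
  then obtain W where W: "W \<in> units (cl_center n)" "M \<star> W = cl_hat W"
    using assms(1) center_unit_with_hat_ratio unfolding M by blast
  have W_inv: "invertible W" and W_clif: "W \<in> clif n"
    using W(1) invertible_clif unfolding cl_units_def by auto
  obtain W' where W': "W' \<in> clif n" "W \<star> W' = cl_one" "invertible W'"
    using W_inv by (rule invertibleE)
  define E where "E = W' \<star> T"
  have WE: "W \<star> E = T" unfolding E_def using mult_cancel_left_inverse[OF W'(2) T] .
  have E: "E \<in> clif n" "invertible E"
    unfolding E_def using cl_mult_clif invertible_mult[OF W'(3) assms(2)] by auto
  have "cl_hat W \<star> cl_hat E = W \<star> E \<star> M"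
    using assms(4) WE by (simp flip: cl_hat_mult)
  also have "\<dots> = W \<star> (M \<star> E)"
    using center_commute[OF central E(1)] by (simp add: cl_mult_assoc)
  also have "\<dots> = M \<star> W \<star> E"
    using center_commute[OF central W_clif] by (simp add: cl_mult_assoc)
  finally have "cl_hat W \<star> cl_hat E = cl_hat W \<star> E" using W(2) by simp
  hence "cl_hat E = E"
    by (rule invertible_cancel_left[OF invertible_hat[OF W_inv] cl_hat_clif[OF E(1)] E(1)])
  hence "E \<in> units (cl_even n)" unfolding cl_units_def cl_even_iff_hat using E by blast
  hence "W \<star> E \<in> cl_P sg n" using W(1) unfolding cl_P_def by blast
  thus ?thesis using WE by simp
qed

lemma A'_inter_B'_subset_P: "cl_A' sg n \<inter> cl_B' sg n \<subseteq> cl_P sg n"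
proof
  fix T assume T: "T \<in> cl_A' sg n \<inter> cl_B' sg n"
  then obtain M where "M \<in> cl_scal_pseudo n" "cl_hat T = T \<star> M" by (rule hat_eq_mult_scal_pseudo)
  moreover have "invertible T" using T unfolding cl_A'_def cl_units_def by auto
  ultimately show "T \<in> cl_P sg n"
    using P_if_hat_eq_mult_even P_if_hat_eq_mult_odd by blast
qed

lemma P_hatE:
  assumes "T \<in> cl_P sg n"
  obtains \<epsilon> K where "\<epsilon> * \<epsilon> = 1" "K \<in> units (cl_center n)"
    "cl_hat T = (\<lambda>C. \<epsilon> * (K \<star> T) C)" "even n \<Longrightarrow> K = cl_one"
proof -
  obtain W T' where T: "T = W \<star> T'" "W \<in> units (cl_center n)"
    "T' \<in> units (cl_even n) \<union> units (cl_odd n)"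
    using assms unfolding cl_P_def by blast
  obtain \<epsilon> where \<epsilon>: "\<epsilon> * \<epsilon> = 1" "cl_hat T' = (\<lambda>A. \<epsilon> * T' A)"
  proof (cases "T' \<in> units (cl_even n)")
    case True
    thus ?thesis using that[of 1] unfolding cl_units_def cl_even_iff_hat by simp
  next
    case False
    thus ?thesis using that[of "-1"] T(3) unfolding cl_units_def cl_odd_iff_hat by auto
  qed
  obtain W' where W': "W' \<in> units (cl_center n)" "W' \<star> W = cl_one"
    using T(2) by (rule units_center_inverse)
  have W_center: "W \<in> cl_center n" and W_clif: "W \<in> clif n" and W_inv: "invertible W"
    and T'_clif: "T' \<in> clif n"
    using T(2,3) invertible_clif unfolding cl_units_def cl_even_def cl_odd_def by auto
  define K where "K = cl_hat W \<star> W'"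
  have "K \<in> units (cl_center n)"
    using W' W_center W_inv unfolding K_def cl_units_def
    by (auto intro: center_mult center_hat invertible_mult invertible_hat)
  moreover have "cl_hat T = (\<lambda>C. \<epsilon> * (K \<star> T) C)"
    using T'_clif unfolding T(1) K_def cl_hat_mult \<epsilon>(2) cl_mult_scale_right
    by (simp add: cl_mult_assoc mult_cancel_left_inverse[OF W'(2) T'_clif])
  moreover have "K = cl_one" if ev: "even n"
  proof -
    obtain w where "W = scal_blade N w 0" using T(2) ev unfolding units_center_iff by auto
    hence "cl_hat W = W" by (simp add: cl_hat_scal_blade)
    moreover have "W' \<in> clif n" using W'(1) invertible_clif unfolding cl_units_def by auto
    ultimately show ?thesis unfolding K_def using center_commute[OF W_center] W'(2) by simp
  qed
  ultimately show ?thesis using that \<epsilon>(1) by blast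
qed

lemma units_scal_pseudo_scale:
  assumes "\<epsilon> * \<epsilon> = 1" "x \<in> units (cl_scal_pseudo n)"
  shows "(\<lambda>C. \<epsilon> * x C) \<in> units (cl_scal_pseudo n)"
proof -
  obtain a b where x: "x = scal_blade N a b" and d: "a * a - pseudo_square * b * b \<noteq> 0"
    using assms(2) unfolding units_scal_pseudo_iff by blast
  have "(\<lambda>C. \<epsilon> * x C) = scal_blade N (\<epsilon> * a) (\<epsilon> * b)"
    unfolding x scal_blade_def by auto
  moreover have "(\<epsilon> * a) * (\<epsilon> * a) - pseudo_square * (\<epsilon> * b) * (\<epsilon> * b)
      = (\<epsilon> * \<epsilon>) * (a * a - pseudo_square * b * b)"
    by (simp add: algebra_simps)
  ultimately show ?thesis using assms(1) d unfolding units_scal_pseudo_iff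
    by (intro exI[of _ "\<epsilon> * a"] exI[of _ "\<epsilon> * b"]) simp
qed

lemma Q'_subset_A'_inter_B': "cl_Q' sg n \<subseteq> cl_A' sg n \<inter> cl_B' sg n"
proof
  fix T assume "T \<in> cl_Q' sg n"
  hence P: "T \<in> cl_P sg n" and U: "cl_rev T \<star> T \<in> units (cl_scal_pseudo n)"
    unfolding cl_Q'_def by auto
  have T: "invertible T" "T \<in> clif n" using P_invertible[OF P] invertible_clif by auto
  obtain \<epsilon> K where \<epsilon>: "\<epsilon> * \<epsilon> = 1" and K: "K \<in> units (cl_center n)"
    and hat: "cl_hat T = (\<lambda>C. \<epsilon> * (K \<star> T) C)"
    using P by (rule P_hatE)
  have rK: "cl_rev K \<in> cl_center n" "invertible (cl_rev K)"
    using K center_rev invertible_rev unfolding cl_units_def by auto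
  have "cl_hat (cl_rev T) \<star> T = (\<lambda>C. \<epsilon> * (cl_rev T \<star> (cl_rev K \<star> T)) C)"
    unfolding cl_hat_rev hat cl_rev_scale cl_mult_scale_left cl_rev_mult
    by (simp add: cl_mult_assoc)
  also have "\<dots> = (\<lambda>C. \<epsilon> * (cl_rev T \<star> T \<star> cl_rev K) C)"
    using center_commute[OF rK(1) T(2)] by (simp add: cl_mult_assoc)
  finally have "cl_hat (cl_rev T) \<star> T \<in> units (cl_scal_pseudo n)"
    using units_scal_pseudo_scale[OF \<epsilon>] U rK center_subset_scal_pseudo
    unfolding cl_units_def by (auto intro!: scal_pseudo_mult invertible_mult)
  thus "T \<in> cl_A' sg n \<inter> cl_B' sg n"
    using T U unfolding cl_A'_def cl_B'_def cl_units_def by auto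
qed

lemma A'_inter_B'_eq_Q': "cl_A' sg n \<inter> cl_B' sg n = cl_Q' sg n"
  using A'_inter_B'_subset_P Q'_subset_A'_inter_B' unfolding cl_Q'_def cl_A'_def by blast

lemma Q_subset_Q': "cl_Q sg n \<subseteq> cl_Q' sg n"
  using center_subset_scal_pseudo unfolding cl_Q_def cl_Q'_def cl_units_def by blast

lemma Q'_subset_P: "cl_Q' sg n \<subseteq> cl_P sg n"
  unfolding cl_Q'_def by blast

lemma Q'_eq_Q_if_odd: "odd n \<Longrightarrow> cl_Q' sg n = cl_Q sg n"
  unfolding cl_Q_def cl_Q'_def cl_center_def by simp

lemma Q'_eq_Q_if_mod4_2:
  assumes "n mod 4 = 2"
  shows "cl_Q' sg n = cl_Q sg n"
proof (rule antisym[OF subsetI Q_subset_Q'])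
  fix T assume T: "T \<in> cl_Q' sg n"
  let ?U = "cl_rev T \<star> T"
  have U: "?U \<in> cl_scal_pseudo n" "invertible ?U" using T unfolding cl_Q'_def cl_units_def by auto
  then obtain a b where ab: "?U = scal_blade N a b" using scal_pseudo_iff by blast
  have "cl_rev ?U = ?U" by (simp add: cl_rev_mult cl_rev_rev)
  hence "scal_blade N a (- b) = scal_blade N a b"
    unfolding ab cl_rev_scal_blade using reversion_exponent_odd[OF assms] by simp
  hence "b = 0" by (simp add: scal_blade_eq_iff[OF N_nonempty])
  moreover have "even n" using assms by presburger
  ultimately have "?U \<in> cl_center n" unfolding center_iff using ab by blast
  thus "T \<in> cl_Q sg n" using T U unfolding cl_Q_def cl_Q'_def cl_units_def by blast
qed

lemma rev_square_witness:
  assumes "S \<subseteq> N" "S \<noteq> {}" "card S mod 4 = 0"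
  shows "scal_blade S 2 1 \<in> cl_P sg n"
    and "cl_rev (scal_blade S 2 1) \<star> scal_blade S 2 1 = scal_blade S (4 + blade_sign sg S S) 4"
proof -
  let ?T = "scal_blade S (2::'a) 1"
  have "blade_sign sg S S = 1 \<or> blade_sign sg S S = -1"
    using assms(1) by (intro square_eq_one_cases blade_sign_square sg_square) (auto intro: finite_subset)
  hence "invertible ?T" using invertible_scal_blade_iff[OF assms(1,2)] by auto
  moreover have "cl_hat ?T = ?T"
  proof -
    have "even (card S)" using assms(3) by presburger
    thus ?thesis by (simp add: cl_hat_scal_blade)
  qed
  ultimately have "?T \<in> units (cl_even n)"
    unfolding cl_units_def cl_even_iff_hat using scal_blade_clif assms(1) by blast
  thus "?T \<in> cl_P sg n" by (intro units_even_odd_subset_P) blast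
  have "cl_rev ?T = ?T"
    using reversion_exponent_even[OF assms(3)] by (simp add: cl_rev_scal_blade)
  thus "cl_rev ?T \<star> ?T = scal_blade S (4 + blade_sign sg S S) 4"
    by (simp add: scal_blade_mult[OF assms(1,2)])
qed

lemma Q_ne_Q'_if_mod4_0:
  assumes "n mod 4 = 0"
  shows "cl_Q sg n \<noteq> cl_Q' sg n"
proof -
  let ?T = "scal_blade N (2::'a) 1"
  have N: "card N mod 4 = 0" using assms by simp
  note witness = rev_square_witness[OF subset_refl N_nonempty N, folded pseudo_square_def]
  have "(4 + pseudo_square) * (4 + pseudo_square) - pseudo_square * 4 * 4 \<noteq> 0"
    using pseudo_square_cases by auto
  hence "cl_rev ?T \<star> ?T \<in> units (cl_scal_pseudo n)"
    unfolding witness(2) units_scal_pseudo_iff by blast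
  hence "?T \<in> cl_Q' sg n" using witness(1) unfolding cl_Q'_def by blast
  moreover have "?T \<notin> cl_Q sg n"
  proof
    assume "?T \<in> cl_Q sg n"
    hence "scal_blade N (4 + pseudo_square) 4 \<in> cl_center n"
      using witness(2) unfolding cl_Q_def cl_units_def by auto
    moreover have "even n" using assms by presburger
    ultimately show False
      unfolding center_iff by (auto simp: scal_blade_eq_iff[OF N_nonempty])
  qed
  ultimately show ?thesis by blast
qed

lemma Q'_ne_P_if_ge_8:
  assumes "n mod 4 = 0" "8 \<le> n"
  shows "cl_Q' sg n \<noteq> cl_P sg n"
proof -
  let ?S = "{..<4::nat}" and ?T = "scal_blade {..<4::nat} (2::'a) 1"
  have "?S \<noteq> {}" by (metis empty_iff lessThan_iff zero_less_numeral)
  hence S: "?S \<subseteq> N" "?S \<noteq> {}" "card ?S mod 4 = 0" using assms(2) by auto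
  have "?S \<noteq> N" using assms(2) lessThan_eq_iff by auto
  hence "cl_rev ?T \<star> ?T \<notin> cl_scal_pseudo n"
    unfolding rev_square_witness(2)[OF S] cl_scal_pseudo_def
    using S(2) by (auto simp: scal_blade_def)
  hence "?T \<notin> cl_Q' sg n" unfolding cl_Q'_def cl_units_def by blast
  thus ?thesis using rev_square_witness(1)[OF S] by blast
qed

lemma Q'_eq_P_if_4:
  assumes "n = 4"
  shows "cl_Q' sg n = cl_P sg n"
proof (rule antisym[OF Q'_subset_P subsetI])
  fix T assume P: "T \<in> cl_P sg n"
  obtain \<epsilon> K where \<epsilon>: "\<epsilon> * \<epsilon> = 1" and hat: "cl_hat T = (\<lambda>C. \<epsilon> * (K \<star> T) C)"
    and K: "even n \<Longrightarrow> K = cl_one"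
    by (rule P_hatE[OF P]) blast
  have "cl_hat T = (\<lambda>C. \<epsilon> * T C)"
    using hat K assms cl_mult_one_left[OF invertible_clif[OF P_invertible[OF P]]] by simp
  let ?U = "cl_rev T \<star> T"
  have "cl_hat ?U = ?U"
    unfolding cl_hat_mult cl_hat_rev \<open>cl_hat T = (\<lambda>C. \<epsilon> * T C)\<close> cl_rev_scale cl_mult_scale_left cl_mult_scale_right
    using \<epsilon> by (simp add: mult.assoc[symmetric])
  moreover have "cl_rev ?U = ?U" by (simp add: cl_rev_mult cl_rev_rev)
  ultimately have "?U \<in> cl_scal_pseudo n"
    using scal_pseudo_if_hat_rev_fixed[OF assms cl_mult_clif] by blast
  moreover have "invertible ?U" using P_invertible[OF P] by (intro invertible_mult invertible_rev)
  ultimately show "T \<in> cl_Q' sg n" using P unfolding cl_Q'_def cl_units_def by blast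
qed

theorem Q'_properties:
  "cl_A' sg n \<inter> cl_B' sg n = cl_Q' sg n \<and>
   (n mod 4 \<in> {1,2,3} \<longrightarrow> cl_Q' sg n = cl_Q sg n) \<and>
   (n mod 4 = 0 \<longrightarrow> cl_Q sg n \<subseteq> cl_Q' sg n \<and> cl_Q' sg n \<subseteq> cl_P sg n \<and>
      cl_Q sg n \<noteq> cl_Q' sg n) \<and>
   (n = 4 \<longrightarrow> cl_Q' sg n = cl_P sg n) \<and>
   (n mod 4 = 0 \<and> n \<ge> 8 \<longrightarrow> cl_Q' sg n \<noteq> cl_P sg n)"
proof (intro conjI impI)
  assume "n mod 4 \<in> {1,2,3}"
  hence "n mod 4 = 1 \<or> n mod 4 = 2 \<or> n mod 4 = 3" by simp
  hence "odd n \<or> n mod 4 = 2" by presburger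
  thus "cl_Q' sg n = cl_Q sg n" using Q'_eq_Q_if_odd Q'_eq_Q_if_mod4_2 by blast
next
  assume "n mod 4 = 0 \<and> 8 \<le> n"
  thus "cl_Q' sg n \<noteq> cl_P sg n" by (intro Q'_ne_P_if_ge_8) auto
next
  assume "n = 4"
  thus "cl_Q' sg n = cl_P sg n" by (rule Q'_eq_P_if_4)
qed (simp_all add: A'_inter_B'_eq_Q' Q_subset_Q' Q'_subset_P Q_ne_Q'_if_mod4_0)

end

lemma diag_clifford_real_sig: "2 \<le> n \<Longrightarrow> diag_clifford (real_sig p) n"
  by unfold_locales (auto simp: real_sig_def)

lemma diag_clifford_complex_sig: "2 \<le> n \<Longrightarrow> diag_clifford complex_sig n"
  by unfold_locales (auto simp: complex_sig_def)

theorem mainTheorem10: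
  fixes n :: nat
  assumes "n \<ge> 2"
  shows
   "(\<forall>p q. p + q = n \<longrightarrow>
      cl_A' (real_sig p) n \<inter> cl_B' (real_sig p) n = cl_Q' (real_sig p) n \<and>
      (n mod 4 \<in> {1,2,3} \<longrightarrow> cl_Q' (real_sig p) n = cl_Q (real_sig p) n) \<and>
      (n mod 4 = 0 \<longrightarrow> cl_Q (real_sig p) n \<subseteq> cl_Q' (real_sig p) n \<and>
          cl_Q' (real_sig p) n \<subseteq> cl_P (real_sig p) n \<and>
          cl_Q (real_sig p) n \<noteq> cl_Q' (real_sig p) n) \<and>
      (n = 4 \<longrightarrow> cl_Q' (real_sig p) n = cl_P (real_sig p) n) \<and>
      (n mod 4 = 0 \<and> n \<ge> 8 \<longrightarrow> cl_Q' (real_sig p) n \<noteq> cl_P (real_sig p) n))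
    \<and>
    (cl_A' complex_sig n \<inter> cl_B' complex_sig n = cl_Q' complex_sig n \<and>
      (n mod 4 \<in> {1,2,3} \<longrightarrow> cl_Q' complex_sig n = cl_Q complex_sig n) \<and>
      (n mod 4 = 0 \<longrightarrow> cl_Q complex_sig n \<subseteq> cl_Q' complex_sig n \<and>
          cl_Q' complex_sig n \<subseteq> cl_P complex_sig n \<and>
          cl_Q complex_sig n \<noteq> cl_Q' complex_sig n) \<and>
      (n = 4 \<longrightarrow> cl_Q' complex_sig n = cl_P complex_sig n) \<and>
      (n mod 4 = 0 \<and> n \<ge> 8 \<longrightarrow> cl_Q' complex_sig n \<noteq> cl_P complex_sig n))"
proof (rule conjI, goal_cases real complex)
  case real
  show ?case
    by (intro allI impI) (rule diag_clifford.Q'_properties[OF diag_clifford_real_sig[OF assms]])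
next
  case complex
  show ?case by (rule diag_clifford.Q'_properties[OF diag_clifford_complex_sig[OF assms]])
qed

end
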